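(* In a monotonous quiver, if $X$ and $Y$ are isotypic phylogenetic vertices, then any universal evolution for $X$ and any universal evolution for $Y$ are isotypic (they have the same length $m$ and, writing them as $A_0\leftarrow\cdots\leftarrow A_m=X$ and $B_0\leftarrow\cdots\leftarrow B_m=Y$, one has $A_k\sim B_k$ for all $k=0,\dots,m$).
   Context: A quiver consists of a class of vertices and, for each ordered pair of vertices $(A,B)$, a set of edges $A\to B$ (loops and multiple edges allowed). An evolution of length $m\ge 0$ is a sequence $A_0\leftarrow A_1\leftarrow\cdots\leftarrow A_m$ of vertices together with edges $A_k\to A_{k-1}$ ($1\le k\le m$); $A_0$ is its initial and $A_m$ its terminal vertex. Write $A\le B$ ($A$ is an ancestor of $B$) if there is an evolution with initial vertex $A$ and terminal vertex $B$; $A,B$ are isotypic ($A\sim B$) if $A\le B$ and $B\le A$. A vertex $A$ is primitive if every ancestor of $A$ is isotypic to $A$. A full evolution for $X$ is an evolution with primitive initial vertex and terminal vertex $X$. The height $h(X)$ is the smallest length of a full evolution for $X$ ($\infty$ if none). An evolution $\alpha=(A_0\leftarrow\cdots\leftarrow A_m)$ embeds in $\beta=(B_0\leftarrow\cdots\leftarrow B_n)$ if $m\le n$ and there are $0\le r_0<\cdots<r_m\le n$ with $A_k\sim B_{r_k}$. A universal evolution for $X$ is a full evolution for $X$ embedding in every full evolution for $X$; $X$ is phylogenetic if one exists. A quiver is monotonous if $h(A)\ge h(B)$ for every edge $A\to B$. *)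

theory Defs
  imports Main "HOL-Library.Extended_Nat"
begin

text \<open>A quiver: vertices are the elements of type 'v, and E A B is the set of edges A \<rightarrow> B.
An evolution A_0 <- A_1 <- ... <- A_m is a pair (vs, es) with vs = [A_0,...,A_m]
and es = [e_1,...,e_m] where e_k is an edge A_k \<rightarrow> A_(k-1) (stored at index k-1).\<close>

type_synonym ('v,'e) quiver = "'v \<Rightarrow> 'v \<Rightarrow> 'e set"
type_synonym ('v,'e) evolution = "'v list \<times> 'e list"

definition is_evol :: "('v,'e) quiver \<Rightarrow> ('v,'e) evolution \<Rightarrow> bool" where
  "is_evol E ev \<longleftrightarrow> fst ev \<noteq> [] \<and> length (snd ev) = length (fst ev) - 1 \<and>
     (\<forall>k < length (snd ev). snd ev ! k \<in> E (fst ev ! Suc k) (fst ev ! k))"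

definition evlen :: "('v,'e) evolution \<Rightarrow> nat" where
  "evlen ev = length (snd ev)"

definition vtx :: "('v,'e) evolution \<Rightarrow> nat \<Rightarrow> 'v" where
  "vtx ev k = fst ev ! k"

definition initial :: "('v,'e) evolution \<Rightarrow> 'v" where
  "initial ev = hd (fst ev)"

definition terminal :: "('v,'e) evolution \<Rightarrow> 'v" where
  "terminal ev = last (fst ev)"

definition ancestor :: "('v,'e) quiver \<Rightarrow> 'v \<Rightarrow> 'v \<Rightarrow> bool" where
  "ancestor E A B \<longleftrightarrow> (\<exists>ev. is_evol E ev \<and> initial ev = A \<and> terminal ev = B)"

definition isotypic :: "('v,'e) quiver \<Rightarrow> 'v \<Rightarrow> 'v \<Rightarrow> bool" where
  "isotypic E A B \<longleftrightarrow> ancestor E A B \<and> ancestor E B A"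

definition primitive :: "('v,'e) quiver \<Rightarrow> 'v \<Rightarrow> bool" where
  "primitive E A \<longleftrightarrow> (\<forall>B. ancestor E B A \<longrightarrow> isotypic E B A)"

definition full_evol :: "('v,'e) quiver \<Rightarrow> 'v \<Rightarrow> ('v,'e) evolution \<Rightarrow> bool" where
  "full_evol E X ev \<longleftrightarrow> is_evol E ev \<and> primitive E (initial ev) \<and> terminal ev = X"

text \<open>Height: least length of a full evolution; \<infinity> (= Inf of the empty set) if none.\<close>
definition height :: "('v,'e) quiver \<Rightarrow> 'v \<Rightarrow> enat" where
  "height E X = Inf {enat (evlen ev) | ev. full_evol E X ev}"

definition embeds :: "('v,'e) quiver \<Rightarrow> ('v,'e) evolution \<Rightarrow> ('v,'e) evolution \<Rightarrow> bool" where
  "embeds E \<alpha> \<beta> \<longleftrightarrow> evlen \<alpha> \<le> evlen \<beta> \<and>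
     (\<exists>r :: nat \<Rightarrow> nat. (\<forall>k < evlen \<alpha>. r k < r (Suc k)) \<and> r (evlen \<alpha>) \<le> evlen \<beta> \<and>
        (\<forall>k \<le> evlen \<alpha>. isotypic E (vtx \<alpha> k) (vtx \<beta> (r k))))"

definition universal_evol :: "('v,'e) quiver \<Rightarrow> 'v \<Rightarrow> ('v,'e) evolution \<Rightarrow> bool" where
  "universal_evol E X ev \<longleftrightarrow> full_evol E X ev \<and> (\<forall>ev'. full_evol E X ev' \<longrightarrow> embeds E ev ev')"

definition phylogenetic :: "('v,'e) quiver \<Rightarrow> 'v \<Rightarrow> bool" where
  "phylogenetic E X \<longleftrightarrow> (\<exists>ev. universal_evol E X ev)"

definition monotonous :: "('v,'e) quiver \<Rightarrow> bool" where
  "monotonous E \<longleftrightarrow> (\<forall>A B. E A B \<noteq> {} \<longrightarrow> height E A \<ge> height E B)"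

end

theory Submission
  imports Defs
begin

text \<open>Each edge raises the height by at most one, and in a monotonous quiver heights never
decrease along an evolution. Comparing a universal evolution with a minimal full evolution
shows that it has length h(X) and that its k-th vertex has height exactly k. Now let
\<open>\<alpha>\<close>, \<open>\<beta>\<close> be universal for X \<sim> Y, extend \<open>\<alpha>\<close> by an evolution from X to Y to a full
evolution \<open>\<delta>\<close> for Y, and embed \<open>\<beta>\<close> into \<open>\<delta>\<close> via indices \<open>k \<le> r k\<close>. Heights along \<open>\<delta>\<close>
are \<open>0, 1, \<dots>, m\<close> on the first m+1 vertices and at least m afterwards, while the vertex
\<open>r k\<close> has height k; this forces \<open>r k = k\<close> for \<open>k < m\<close>, i.e. \<open>\<beta>\<^sub>k \<sim> \<delta>\<^sub>k = \<alpha>\<^sub>k\<close>.\<close>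

lemma length_fst_evol: "is_evol E ev \<Longrightarrow> length (fst ev) = Suc (evlen ev)"
  unfolding is_evol_def evlen_def by auto

lemma initial_eq_vtx: "is_evol E ev \<Longrightarrow> initial ev = vtx ev 0"
  unfolding is_evol_def initial_def vtx_def by (simp add: hd_conv_nth)

lemma terminal_eq_vtx: "is_evol E ev \<Longrightarrow> terminal ev = vtx ev (evlen ev)"
  using length_fst_evol[of E ev] unfolding is_evol_def terminal_def vtx_def
  by (simp add: last_conv_nth)

lemma evol_edge: "is_evol E ev \<Longrightarrow> k < evlen ev \<Longrightarrow> E (vtx ev (Suc k)) (vtx ev k) \<noteq> {}"
  unfolding is_evol_def evlen_def vtx_def by blast

lemma is_evol_single: "is_evol E ([A], [])"
  unfolding is_evol_def by simp

lemma is_evol_edge: "e \<in> E A B \<Longrightarrow> is_evol E ([B, A], [e])"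
  unfolding is_evol_def by (simp add: less_Suc_eq)

definition evol_append :: "('v,'e) evolution \<Rightarrow> ('v,'e) evolution \<Rightarrow> ('v,'e) evolution" where
  "evol_append \<alpha> \<gamma> = (fst \<alpha> @ tl (fst \<gamma>), snd \<alpha> @ snd \<gamma>)"

lemma evlen_evol_append: "evlen (evol_append \<alpha> \<gamma>) = evlen \<alpha> + evlen \<gamma>"
  unfolding evol_append_def evlen_def by simp

lemma vtx_evol_append:
  assumes "is_evol E \<alpha>" "is_evol E \<gamma>" "i \<le> evlen \<alpha> + evlen \<gamma>"
  shows "vtx (evol_append \<alpha> \<gamma>) i = (if i \<le> evlen \<alpha> then vtx \<alpha> i else vtx \<gamma> (i - evlen \<alpha>))"
proof -
  have La: "length (fst \<alpha>) = Suc (evlen \<alpha>)" and Lg: "length (fst \<gamma>) = Suc (evlen \<gamma>)"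
    using assms(1,2) by (simp_all add: length_fst_evol)
  show ?thesis
  proof (cases "i \<le> evlen \<alpha>")
    case True
    then show ?thesis using La unfolding evol_append_def vtx_def by (simp add: nth_append)
  next
    case False
    then have "i - Suc (evlen \<alpha>) < length (tl (fst \<gamma>))" using assms(3) Lg by simp
    then show ?thesis using False La Lg unfolding evol_append_def vtx_def
      by (simp add: nth_append nth_tl Suc_diff_Suc not_le)
  qed
qed

lemma vtx_evol_append_right:
  assumes "is_evol E \<alpha>" "is_evol E \<gamma>" "terminal \<alpha> = initial \<gamma>"
    and "evlen \<alpha> \<le> i" "i \<le> evlen \<alpha> + evlen \<gamma>"
  shows "vtx (evol_append \<alpha> \<gamma>) i = vtx \<gamma> (i - evlen \<alpha>)"
  using vtx_evol_append[OF assms(1,2,5)] assms(1-4)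
  by (cases "i = evlen \<alpha>") (auto simp: terminal_eq_vtx initial_eq_vtx)

lemma is_evol_evol_append:
  assumes a: "is_evol E \<alpha>" and g: "is_evol E \<gamma>" and t: "terminal \<alpha> = initial \<gamma>"
  shows "is_evol E (evol_append \<alpha> \<gamma>)"
  unfolding is_evol_def
proof (intro conjI allI impI)
  let ?\<delta> = "evol_append \<alpha> \<gamma>"
  have La: "length (fst \<alpha>) = Suc (evlen \<alpha>)" and Lg: "length (fst \<gamma>) = Suc (evlen \<gamma>)"
    using a g by (simp_all add: length_fst_evol)
  then show "fst ?\<delta> \<noteq> []" "length (snd ?\<delta>) = length (fst ?\<delta>) - 1"
    unfolding evol_append_def by (auto simp: evlen_def)
  fix k assume "k < length (snd ?\<delta>)"
  then have k: "k < evlen \<alpha> + evlen \<gamma>" by (simp add: evlen_evol_append[unfolded evlen_def] evlen_def)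
  note V = vtx_evol_append[OF a g]
  show "snd ?\<delta> ! k \<in> E (fst ?\<delta> ! Suc k) (fst ?\<delta> ! k)"
  proof (cases "k < evlen \<alpha>")
    case True
    have "snd \<alpha> ! k \<in> E (vtx \<alpha> (Suc k)) (vtx \<alpha> k)"
      using a True unfolding is_evol_def vtx_def evlen_def by blast
    then show ?thesis using True k V[of k] V[of "Suc k"]
      by (simp add: vtx_def evol_append_def nth_append evlen_def)
  next
    case False
    then have "k - evlen \<alpha> < evlen \<gamma>" using k by simp
    then have "snd \<gamma> ! (k - evlen \<alpha>) \<in> E (vtx \<gamma> (Suc (k - evlen \<alpha>))) (vtx \<gamma> (k - evlen \<alpha>))"
      using g unfolding is_evol_def vtx_def evlen_def by blast
    then show ?thesis
      using False k vtx_evol_append_right[OF a g t, of k] vtx_evol_append_right[OF a g t, of "Suc k"]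
      by (simp add: vtx_def evol_append_def nth_append evlen_def Suc_diff_le)
  qed
qed

lemma initial_evol_append: "is_evol E \<alpha> \<Longrightarrow> initial (evol_append \<alpha> \<gamma>) = initial \<alpha>"
  unfolding evol_append_def initial_def is_evol_def by simp

lemma terminal_evol_append:
  assumes "is_evol E \<alpha>" "is_evol E \<gamma>" "terminal \<alpha> = initial \<gamma>"
  shows "terminal (evol_append \<alpha> \<gamma>) = terminal \<gamma>"
  using vtx_evol_append_right[OF assms, of "evlen \<alpha> + evlen \<gamma>"]
  by (simp add: terminal_eq_vtx[OF is_evol_evol_append[OF assms]] terminal_eq_vtx[OF assms(2)]
      evlen_evol_append)

lemma full_evol_append:
  "full_evol E X \<alpha> \<Longrightarrow> is_evol E \<gamma> \<Longrightarrow> initial \<gamma> = X \<Longrightarrow> terminal \<gamma> = Y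
    \<Longrightarrow> full_evol E Y (evol_append \<alpha> \<gamma>)"
  unfolding full_evol_def
  by (auto simp: is_evol_evol_append initial_evol_append terminal_evol_append)

lemma height_le_evlen: "full_evol E X ev \<Longrightarrow> height E X \<le> enat (evlen ev)"
  unfolding height_def by (rule Inf_lower) blast

lemma height_attained:
  assumes "height E X \<noteq> \<infinity>"
  obtains ev where "full_evol E X ev" "enat (evlen ev) = height E X"
proof -
  let ?S = "{enat (evlen ev) | ev. full_evol E X ev}"
  have "?S \<noteq> {}"
  proof
    assume "?S = {}"
    then have "height E X = \<infinity>" unfolding height_def by (simp add: top_enat_def)
    then show False using assms by simp
  qed
  then obtain x where "x \<in> ?S" by blast
  then have "(LEAST x. x \<in> ?S) \<in> ?S" by (rule LeastI)
  then have "Inf ?S \<in> ?S" using \<open>?S \<noteq> {}\<close> by (simp only: Inf_enat_def if_False)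
  then obtain ev where "full_evol E X ev" "Inf ?S = enat (evlen ev)" by auto
  then show ?thesis using that unfolding height_def by simp
qed

lemma height_primitive: "primitive E A \<Longrightarrow> height E A = 0"
  using height_le_evlen[of E A "([A], [])"] is_evol_single[of E A]
  by (simp add: full_evol_def initial_def terminal_def evlen_def flip: zero_enat_def)

lemma height_edge_le:
  assumes "E A B \<noteq> {}"
  shows "height E A \<le> height E B + 1"
proof (cases "height E B = \<infinity>")
  case False
  then obtain ev where ev: "full_evol E B ev" "enat (evlen ev) = height E B"
    by (rule height_attained)
  obtain e where "e \<in> E A B" using assms by blast
  then have edge: "is_evol E ([B, A], [e])" by (rule is_evol_edge)
  have "full_evol E A (evol_append ev ([B, A], [e]))"
    using full_evol_append[OF ev(1) edge] by (simp add: initial_def terminal_def)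
  then have "height E A \<le> enat (evlen (evol_append ev ([B, A], [e])))"
    by (rule height_le_evlen)
  then have "height E A \<le> enat (evlen ev + 1)"
    unfolding evlen_evol_append by (simp add: evlen_def)
  then show ?thesis using ev(2)[symmetric] by (simp add: one_enat_def)
qed simp

lemma height_along_evol_le:
  assumes "is_evol E ev" "i \<le> j" "j \<le> evlen ev"
  shows "height E (vtx ev j) \<le> height E (vtx ev i) + enat (j - i)"
  using assms(2,3)
proof (induction rule: dec_induct)
  case (step n)
  have "height E (vtx ev (Suc n)) \<le> height E (vtx ev n) + 1"
    using height_edge_le[of E "vtx ev (Suc n)" "vtx ev n"] evol_edge[OF assms(1), of n] step
    by simp
  also have "\<dots> \<le> height E (vtx ev i) + enat (n - i) + 1"
    using step by (simp add: add_right_mono)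
  finally show ?case using step.hyps(1) by (simp add: add.assoc one_enat_def Suc_diff_le)
qed (simp add: zero_enat_def[symmetric])

lemma height_full_evol_vtx_le:
  assumes "full_evol E X ev" "i \<le> evlen ev"
  shows "height E (vtx ev i) \<le> enat i"
proof -
  have "height E (vtx ev 0) = 0"
    using assms(1) height_primitive initial_eq_vtx by (metis full_evol_def)
  then show ?thesis
    using height_along_evol_le[of E ev 0 i] assms by (simp add: full_evol_def)
qed

lemma monotonous_height_mono_evol:
  assumes "monotonous E" "is_evol E ev" "i \<le> j" "j \<le> evlen ev"
  shows "height E (vtx ev i) \<le> height E (vtx ev j)"
  using assms(3,4)
proof (induction rule: dec_induct)
  case (step n)
  then show ?case
    using assms(1) evol_edge[OF assms(2), of n] unfolding monotonous_def by fastforce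
qed simp

lemma monotonous_ancestor_height:
  "monotonous E \<Longrightarrow> ancestor E A B \<Longrightarrow> height E A \<le> height E B"
  unfolding ancestor_def
  using monotonous_height_mono_evol initial_eq_vtx terminal_eq_vtx by (metis le0 order_refl)

lemma monotonous_isotypic_height:
  "monotonous E \<Longrightarrow> isotypic E A B \<Longrightarrow> height E A = height E B"
  unfolding isotypic_def by (metis monotonous_ancestor_height order_antisym)

lemma embeds_index_gap:
  assumes "\<forall>k < n. r k < r (Suc k)" "i \<le> j" "j \<le> n"
  shows "r i + (j - i) \<le> r j"
  using assms(2,3)
proof (induction rule: dec_induct)
  case (step m)
  then have "r m < r (Suc m)" using assms(1) by simp
  then show ?case using step by linarith
qed simp

lemma embedsE:
  assumes "embeds E \<alpha> \<beta>"
  obtains r where "\<And>k. k \<le> evlen \<alpha> \<Longrightarrow> k \<le> r k \<and> r k \<le> evlen \<beta> \<and>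
    isotypic E (vtx \<alpha> k) (vtx \<beta> (r k))"
proof -
  obtain r where r: "\<forall>k < evlen \<alpha>. r k < r (Suc k)" "r (evlen \<alpha>) \<le> evlen \<beta>"
      "\<forall>k \<le> evlen \<alpha>. isotypic E (vtx \<alpha> k) (vtx \<beta> (r k))"
    using assms unfolding embeds_def by blast
  have "k \<le> r k \<and> r k \<le> evlen \<beta>" if "k \<le> evlen \<alpha>" for k
    using embeds_index_gap[OF r(1), of 0 k] embeds_index_gap[OF r(1), of k "evlen \<alpha>"] r(2) that
    by linarith
  then show ?thesis using that r(3) by blast
qed

lemma universal_evol_evlen:
  assumes "universal_evol E X \<alpha>"
  shows "height E X = enat (evlen \<alpha>)"
proof -
  have le: "height E X \<le> enat (evlen \<alpha>)"
    using assms unfolding universal_evol_def by (simp add: height_le_evlen)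
  then have "height E X \<noteq> \<infinity>" by (cases "height E X") auto
  then obtain ev where ev: "full_evol E X ev" "enat (evlen ev) = height E X"
    by (rule height_attained)
  then have "evlen \<alpha> \<le> evlen ev"
    using assms unfolding universal_evol_def embeds_def by blast
  then show ?thesis using le ev(2) by (metis antisym enat_ord_simps(1))
qed

lemma universal_evol_height_vtx:
  assumes "universal_evol E X \<alpha>" "i \<le> evlen \<alpha>"
  shows "height E (vtx \<alpha> i) = enat i"
proof -
  have f: "full_evol E X \<alpha>" using assms(1) unfolding universal_evol_def by simp
  then have ev: "is_evol E \<alpha>" unfolding full_evol_def by simp
  have "enat (evlen \<alpha>) = height E (vtx \<alpha> (evlen \<alpha>))"
    using universal_evol_evlen[OF assms(1)] f terminal_eq_vtx[OF ev] by (simp add: full_evol_def)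
  also have "\<dots> \<le> height E (vtx \<alpha> i) + enat (evlen \<alpha> - i)"
    using height_along_evol_le[OF ev assms(2) order_refl] .
  finally have "enat i \<le> height E (vtx \<alpha> i)"
    using assms(2) by (cases "height E (vtx \<alpha> i)") auto
  then show ?thesis using height_full_evol_vtx_le[OF f assms(2)] by simp
qed

lemma universal_evol_isotypic_prefix:
  assumes mono: "monotonous E" and univ: "universal_evol E Y \<beta>" and full: "full_evol E Y \<delta>"
    and heights: "\<And>j. j \<le> evlen \<beta> \<Longrightarrow> height E (vtx \<delta> j) = enat j"
    and k: "k < evlen \<beta>"
  shows "isotypic E (vtx \<beta> k) (vtx \<delta> k)"
proof -
  obtain r where r: "\<And>k. k \<le> evlen \<beta> \<Longrightarrow> k \<le> r k \<and> r k \<le> evlen \<delta> \<and>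
      isotypic E (vtx \<beta> k) (vtx \<delta> (r k))"
    using univ full embedsE unfolding universal_evol_def by metis
  have iso: "isotypic E (vtx \<beta> k) (vtx \<delta> (r k))" and bounds: "k \<le> r k" "r k \<le> evlen \<delta>"
    using r[of k] k by auto
  have height_rk: "height E (vtx \<delta> (r k)) = enat k"
    using monotonous_isotypic_height[OF mono iso] universal_evol_height_vtx[OF univ] k by simp
  have "r k = k"
  proof (rule ccontr)
    assume "r k \<noteq> k"
    define j where "j = min (r k) (evlen \<beta>)"
    have "enat j \<le> height E (vtx \<delta> (r k))"
      using heights[of j] monotonous_height_mono_evol[OF mono _ _ bounds(2), of j] full
      unfolding j_def full_evol_def by simp
    moreover have "k < j" using \<open>r k \<noteq> k\<close> bounds k unfolding j_def by simp
    ultimately show False using height_rk by simp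
  qed
  then show ?thesis using iso by simp
qed

theorem corollary6p4:
  fixes E :: "('v,'e) quiver"
  assumes "monotonous E"
    and "phylogenetic E X" and "phylogenetic E Y"
    and "isotypic E X Y"
    and "universal_evol E X \<alpha>" and "universal_evol E Y \<beta>"
  shows "evlen \<alpha> = evlen \<beta> \<and> (\<forall>k \<le> evlen \<alpha>. isotypic E (vtx \<alpha> k) (vtx \<beta> k))"
proof -
  have full_\<alpha>: "full_evol E X \<alpha>" and full_\<beta>: "full_evol E Y \<beta>"
    using assms(5,6) unfolding universal_evol_def by auto
  have ev_\<alpha>: "is_evol E \<alpha>" and ev_\<beta>: "is_evol E \<beta>"
    using full_\<alpha> full_\<beta> unfolding full_evol_def by auto
  have len: "evlen \<alpha> = evlen \<beta>"
    using universal_evol_evlen[OF assms(5)] universal_evol_evlen[OF assms(6)]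
      monotonous_isotypic_height[OF assms(1,4)] by simp
  obtain \<gamma> where \<gamma>: "is_evol E \<gamma>" "initial \<gamma> = X" "terminal \<gamma> = Y"
    using assms(4) unfolding isotypic_def ancestor_def by blast
  let ?\<delta> = "evol_append \<alpha> \<gamma>"
  have prefix: "vtx ?\<delta> j = vtx \<alpha> j" if "j \<le> evlen \<alpha>" for j
    using vtx_evol_append[OF ev_\<alpha> \<gamma>(1), of j] that by simp
  have heights: "height E (vtx ?\<delta> j) = enat j" if "j \<le> evlen \<beta>" for j
    using prefix universal_evol_height_vtx[OF assms(5)] that len by simp
  have "isotypic E (vtx \<beta> k) (vtx \<alpha> k)" if "k < evlen \<beta>" for k
    using universal_evol_isotypic_prefix[OF assms(1,6) full_evol_append[OF full_\<alpha> \<gamma>] heights that]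
      prefix that len by simp
  moreover have "isotypic E (vtx \<alpha> (evlen \<alpha>)) (vtx \<beta> (evlen \<beta>))"
    using assms(4) full_\<alpha> full_\<beta> terminal_eq_vtx[OF ev_\<alpha>] terminal_eq_vtx[OF ev_\<beta>]
    by (simp add: full_evol_def)
  ultimately show ?thesis
    using len by (metis isotypic_def le_neq_implies_less)
qed

end
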